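(* Let $a\in \mathcal{A}$. Then the following are equivalent: (1) $a$ has a $w$-weighted core inverse. (2) $aw\in \mathcal{A}^{\#}$ and $waw\in \mathcal{A}^{(1,3)}$.
   Context: $\mathcal{A}$ is a complex Banach *-algebra with identity and $w\in\mathcal{A}$. $a$ has a $w$-weighted core inverse if there is $x$ with $a(wx)^2=x$, $(wawx)^*=wawx$, $xw(aw)^2=aw$. $\mathcal{A}^{\#}$ is the set of group invertible elements; $\mathcal{A}^{(1,3)}$ is the set of $b$ having some $y$ with $b=byb$ and $(by)^*=by$. *)

theory Defs
  imports Complex_Main
begin

text \<open>A complex Banach *-algebra with identity: a Banach algebra with unit
(over the reals, as provided by the library), equipped with a complex scalar
multiplication compatible with the real one and the multiplication, and an
involution \<open>adj\<close> (the star operation) that is conjugate-linear,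
additive, involutive and anti-multiplicative.\<close>

class banach_star_algebra_1 = banach + real_normed_algebra_1 +
  fixes scaleC :: "complex \<Rightarrow> 'a \<Rightarrow> 'a"
    and adj :: "'a \<Rightarrow> 'a"
  assumes scaleC_of_real: "scaleC (complex_of_real r) x = scaleR r x"
    and scaleC_add_right: "scaleC c (x + y) = scaleC c x + scaleC c y"
    and scaleC_add_left: "scaleC (c + d) x = scaleC c x + scaleC d x"
    and scaleC_scaleC: "scaleC c (scaleC d x) = scaleC (c * d) x"
    and scaleC_one: "scaleC 1 x = x"
    and scaleC_mult_left: "scaleC c x * y = scaleC c (x * y)"
    and scaleC_mult_right: "x * scaleC c y = scaleC c (x * y)"
    and norm_scaleC: "norm (scaleC c x) = cmod c * norm x"
    and adj_adj: "adj (adj x) = x"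
    and adj_add: "adj (x + y) = adj x + adj y"
    and adj_mult: "adj (x * y) = adj y * adj x"
    and adj_scaleC: "adj (scaleC c x) = scaleC (cnj c) (adj x)"

definition w_core_inverse :: "'a::banach_star_algebra_1 \<Rightarrow> 'a \<Rightarrow> 'a \<Rightarrow> bool" where
  "w_core_inverse w a x \<longleftrightarrow>
     a * (w * x)^2 = x \<and> adj (w * a * w * x) = w * a * w * x \<and> x * w * (a * w)^2 = a * w"

definition has_w_core_inverse :: "'a::banach_star_algebra_1 \<Rightarrow> 'a \<Rightarrow> bool" where
  "has_w_core_inverse w a \<longleftrightarrow> (\<exists>x. w_core_inverse w a x)"

definition group_invertible :: "'a::banach_star_algebra_1 \<Rightarrow> bool" where
  "group_invertible b \<longleftrightarrow> (\<exists>x. b * x * b = b \<and> x * b * x = x \<and> b * x = x * b)"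

definition inv13 :: "'a::banach_star_algebra_1 \<Rightarrow> bool" where
  "inv13 b \<longleftrightarrow> (\<exists>y. b = b * y * b \<and> adj (b * y) = b * y)"

end

theory Submission
  imports Defs
begin

text \<open>Write \<open>b = a w\<close>. Multiplying the weighted core equations on the right by \<open>w\<close> shows
that \<open>y = x w\<close> satisfies \<open>y b\<^sup>2 = b\<close> and \<open>b y\<^sup>2 = y\<close>; so \<open>b\<close> is divisible by \<open>b\<^sup>2\<close> on both
sides, which makes it group invertible, and \<open>b y b = b\<close> makes \<open>w a w x\<close> a Hermitian
inner inverse of \<open>w a w\<close>. Conversely, if \<open>g\<close> is an inner inverse of \<open>b\<close> commuting with \<open>b\<close>
and \<open>z\<close> is a {1,3}-inverse of \<open>w a w\<close>, then \<open>z w\<close> is an inner inverse of \<open>b\<close>, since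
\<open>b = g a (w a w)\<close>, and \<open>x = g a w z\<close> is a weighted core inverse of \<open>a\<close>.\<close>

lemma group_inverse_if_divisible_by_square:
  fixes b u v :: "'a::semigroup_mult"
  assumes u: "b = u * b * b" and v: "b = b * b * v"
  defines "g \<equiv> u * b * v"
  shows "b * g * b = b" and "g * b * g = g" and "b * g = g * b"
proof -
  have ub_eq_bv: "u * b = b * v"
    by (metis u v mult.assoc)
  have bg: "b * g = u * b"
    unfolding g_def by (metis ub_eq_bv v mult.assoc)
  have gb: "g * b = u * b"
    unfolding g_def by (metis ub_eq_bv u mult.assoc)
  show "b * g * b = b"
    using bg u by (metis mult.assoc)
  show "g * b * g = g"
    using gb unfolding g_def by (metis ub_eq_bv v mult.assoc)
  show "b * g = g * b"
    using bg gb by simp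
qed

lemma group_invertibleI:
  fixes b u v :: "'a::banach_star_algebra_1"
  assumes "b = u * b * b" and "b = b * b * v"
  shows "group_invertible b"
  unfolding group_invertible_def
  using group_inverse_if_divisible_by_square[OF assms] by blast

lemma inner_inverse_if_absorbing:
  fixes b y :: "'a::semigroup_mult"
  assumes yb: "y * b * b = b" and byy: "b * y * y = y"
  shows "b * y * b = b"
  by (metis yb byy mult.assoc)

lemma w_core_inverse_imp_group_invertible_and_inv13:
  fixes a w x :: "'a::banach_star_algebra_1"
  assumes "w_core_inverse w a x"
  shows "group_invertible (a * w)" and "inv13 (w * a * w)"
proof -
  define b where "b = a * w"
  define y where "y = x * w"
  have yb: "y * b * b = b" and byy: "b * y * y = y"
    and herm: "adj (w * a * w * x) = w * a * w * x"
    using assms unfolding w_core_inverse_def b_def y_def power2_eq_square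
    by (metis mult.assoc)+
  have byb: "b * y * b = b"
    using inner_inverse_if_absorbing[OF yb byy] .
  have "b = b * b * (y * y * b)"
    by (metis byy byb mult.assoc)
  with yb show "group_invertible (a * w)"
    using group_invertibleI unfolding b_def by metis
  have "w * a * w * x * (w * a * w) = w * a * w"
    using byb unfolding b_def y_def by (metis mult.assoc)
  with herm show "inv13 (w * a * w)"
    unfolding inv13_def by metis
qed

lemma w_core_inverse_of_commuting_inner_inverse:
  fixes a w g z :: "'a::banach_star_algebra_1"
  assumes inner: "a * w * g * (a * w) = a * w" and commute: "a * w * g = g * (a * w)"
    and z: "w * a * w = w * a * w * z * (w * a * w)" and herm: "adj (w * a * w * z) = w * a * w * z"
  shows "w_core_inverse w a (g * a * w * z)"
proof -
  define b where "b = a * w"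
  have bgb: "b * g * b = b" and comm: "b * g = g * b"
    using inner commute unfolding b_def by simp_all
  have gbb: "g * b * b = b"
    by (metis bgb comm mult.assoc)
  have bzwb: "b * z * w * b = b"
  proof -
    have "b = g * a * (w * a * w)"
      using gbb unfolding b_def by (simp add: mult.assoc)
    also have "\<dots> = g * a * (w * a * w * z * (w * a * w))"
      using z by simp
    also have "\<dots> = g * b * b * z * w * b"
      unfolding b_def by (simp add: mult.assoc)
    finally show ?thesis
      using gbb by simp
  qed
  have "a * (w * (g * b * z))\<^sup>2 = b * g * b * z * w * g * b * z"
    unfolding b_def power2_eq_square by (simp add: mult.assoc)
  also have "\<dots> = b * z * w * b * g * z"
    using bgb comm by (metis mult.assoc)
  also have "\<dots> = g * b * z"
    using bzwb comm by (metis mult.assoc)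
  finally have eq1: "a * (w * (g * b * z))\<^sup>2 = g * b * z" .
  have "w * a * w * (g * b * z) = w * (b * g * b) * z"
    unfolding b_def by (simp add: mult.assoc comm)
  also have "\<dots> = w * a * w * z"
    using bgb unfolding b_def by (simp add: mult.assoc)
  finally have eq2: "w * a * w * (g * b * z) = w * a * w * z" .
  have "g * b * z * w * (a * w)\<^sup>2 = g * (b * z * w * b) * b"
    unfolding b_def power2_eq_square by (simp add: mult.assoc)
  also have "\<dots> = a * w"
    using bzwb gbb unfolding b_def by (simp add: mult.assoc)
  finally have eq3: "g * b * z * w * (a * w)\<^sup>2 = a * w" .
  show ?thesis
    unfolding w_core_inverse_def using eq1 eq2 eq3 herm
    by (simp add: b_def mult.assoc)
qed

theorem theorem2p4:
  fixes a w :: "'a::banach_star_algebra_1"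
  shows "has_w_core_inverse w a \<longleftrightarrow> group_invertible (a * w) \<and> inv13 (w * a * w)"
proof
  assume "has_w_core_inverse w a"
  then obtain x where "w_core_inverse w a x"
    unfolding has_w_core_inverse_def by blast
  then show "group_invertible (a * w) \<and> inv13 (w * a * w)"
    using w_core_inverse_imp_group_invertible_and_inv13 by blast
next
  assume "group_invertible (a * w) \<and> inv13 (w * a * w)"
  then obtain g z where "a * w * g * (a * w) = a * w" "a * w * g = g * (a * w)"
    and "w * a * w = w * a * w * z * (w * a * w)" "adj (w * a * w * z) = w * a * w * z"
    unfolding group_invertible_def inv13_def by blast
  then have "w_core_inverse w a (g * a * w * z)"
    by (rule w_core_inverse_of_commuting_inner_inverse)
  then show "has_w_core_inverse w a"
    unfolding has_w_core_inverse_def by blast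
qed

end
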